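(* Let $B\ge1$, $\mathcal{E}>0$, $c>0$, and $\mathsf{MSE}(\mathbf{i},\mathbf{t})=c\sum_{b=0}^{B-1}4^b\exp(-2(i_b-1)t_b)$. Let $\mathbf{i}^{(0)}=(2,\dots,2)$, $\mathbf{t}^{(0)}=\frac{\mathcal{E}}{4B}(1,\dots,1)$ (uniform energy allocation), and let $\widetilde{\mathbf{t}}$ be the optimal solution of minimizing $\sum_b4^b\exp(-2t_b)$ subject to $\sum_b 4t_b\le\mathcal{E}$, $t_b\ge0$. If $\mathcal{E}>2B(B-1)\log2$, then $$\mathsf{MSE}(\mathbf{i}^{(0)},\widetilde{\mathbf{t}})=c\cdot\frac{B}{2}\cdot2^B\exp\Bigl(-\frac{\mathcal{E}}{2B}\Bigr),\qquad \mathsf{MSE}(\mathbf{i}^{(0)},\mathbf{t}^{(0)})=c\cdot\frac{4^B-1}{3}\exp\Bigl(-\frac{\mathcal{E}}{2B}\Bigr),$$ and hence $$\gamma=\frac{\mathsf{MSE}(\mathbf{i}^{(0)},\widetilde{\mathbf{t}})}{\mathsf{MSE}(\mathbf{i}^{(0)},\mathbf{t}^{(0)})}=\frac{3B}{2}\cdot\frac{2^B}{4^B-1}.$$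
   Context: $\log$ denotes the natural logarithm. $\widetilde{\mathbf{t}}$ is the output of one step of alternate convex search (duration update) with currents fixed at $i_b=2$ for all $b$. *)

theory Defs
  imports Complex_Main
begin

text \<open>Vectors indexed by b = 0..B-1 are represented as functions nat => real;
  only the values at b < B matter.\<close>

definition MSE :: "real \<Rightarrow> nat \<Rightarrow> (nat \<Rightarrow> real) \<Rightarrow> (nat \<Rightarrow> real) \<Rightarrow> real" where
  "MSE c B i t = c * (\<Sum>b<B. 4 ^ b * exp (- 2 * (i b - 1) * t b))"

definition dur_obj :: "nat \<Rightarrow> (nat \<Rightarrow> real) \<Rightarrow> real" where
  "dur_obj B t = (\<Sum>b<B. 4 ^ b * exp (- 2 * t b))"

definition dur_feasible :: "nat \<Rightarrow> real \<Rightarrow> (nat \<Rightarrow> real) \<Rightarrow> bool" where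
  "dur_feasible B E t \<longleftrightarrow> (\<Sum>b<B. 4 * t b) \<le> E \<and> (\<forall>b<B. 0 \<le> t b)"

definition dur_optimal :: "nat \<Rightarrow> real \<Rightarrow> (nat \<Rightarrow> real) \<Rightarrow> bool" where
  "dur_optimal B E t \<longleftrightarrow> dur_feasible B E t \<and>
     (\<forall>s. dur_feasible B E s \<longrightarrow> dur_obj B t \<le> dur_obj B s)"

end

theory Submission
  imports Defs
begin

text \<open>With currents fixed at 2, the MSE is c times the duration objective
  \<open>\<Sum>b. 4^b exp(-2 t\<^sub>b)\<close>. Its minimiser under \<open>\<Sum>b. t\<^sub>b \<le> E/4\<close> is the
  water-filling allocation that makes all B terms equal to a common level K;
  the tangent-line bound \<open>exp x \<ge> 1 + x\<close> shows that no allocation with at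
  most the same total beats B K. The hypothesis on E is exactly what keeps the
  water-filling durations nonnegative, and computing K and the geometric sum
  for the uniform allocation gives the two values and their ratio.\<close>

lemma sum_weighted_exp_ge_equalized:
  fixes w t s :: "nat \<Rightarrow> real"
  assumes level: "\<And>b. b < n \<Longrightarrow> w b * exp (- a * t b) = K"
    and weights: "\<And>b. b < n \<Longrightarrow> 0 \<le> w b" and "a \<ge> 0"
    and total: "(\<Sum>b<n. s b) \<le> (\<Sum>b<n. t b)"
  shows "real n * K \<le> (\<Sum>b<n. w b * exp (- a * s b))"
proof -
  have K: "0 \<le> K" if "b < n" for b
    using level[OF that] weights[OF that] by (metis exp_ge_zero mult_nonneg_nonneg)
  have tangent: "K * (1 - a * (s b - t b)) \<le> w b * exp (- a * s b)" if "b < n" for b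
  proof -
    have "exp (- a * s b) = exp (- a * t b) * exp (- a * (s b - t b))"
      by (simp add: algebra_simps flip: exp_add)
    then have "w b * exp (- a * s b) = K * exp (- a * (s b - t b))"
      using level[OF that] by simp
    moreover have "1 - a * (s b - t b) \<le> exp (- a * (s b - t b))"
      using exp_ge_add_one_self[of "- a * (s b - t b)"] by linarith
    ultimately show ?thesis using K[OF that] by (simp add: mult_left_mono)
  qed
  have "real n * K \<le> K * (real n - a * ((\<Sum>b<n. s b) - (\<Sum>b<n. t b)))"
  proof (cases "n = 0")
    case False
    then have "0 \<le> K * (a * ((\<Sum>b<n. t b) - (\<Sum>b<n. s b)))"
      using K[of 0] total \<open>a \<ge> 0\<close> by simp
    then show ?thesis by (simp add: algebra_simps)
  qed simp
  also have "\<dots> = (\<Sum>b<n. K * (1 - a * (s b - t b)))"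
    by (simp add: sum_distrib_left sum_subtractf right_diff_distrib)
  also have "\<dots> \<le> (\<Sum>b<n. w b * exp (- a * s b))"
    using tangent by (rule sum_mono) simp
  finally show ?thesis .
qed

lemma dur_obj_optimal_eq_level:
  assumes "dur_optimal B E tt"
    and budget: "(\<Sum>b<B. 4 * ts b) = E" and nonneg: "\<And>b. b < B \<Longrightarrow> 0 \<le> ts b"
    and level: "\<And>b. b < B \<Longrightarrow> 4 ^ b * exp (- 2 * ts b) = K"
  shows "dur_obj B tt = real B * K"
proof -
  have "dur_feasible B E ts"
    using budget nonneg by (simp add: dur_feasible_def)
  then have "dur_obj B tt \<le> dur_obj B ts"
    using assms(1) by (simp add: dur_optimal_def)
  also have "\<dots> = real B * K"
    using level by (simp add: dur_obj_def)
  finally have upper: "dur_obj B tt \<le> real B * K" .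
  have total: "(\<Sum>b<B. tt b) \<le> (\<Sum>b<B. ts b)"
    using assms(1) budget by (simp add: dur_optimal_def dur_feasible_def flip: sum_distrib_left)
  have "real B * K \<le> dur_obj B tt"
    unfolding dur_obj_def using sum_weighted_exp_ge_equalized[OF level _ _ total] by simp
  with upper show ?thesis by linarith
qed

definition water_filling :: "nat \<Rightarrow> real \<Rightarrow> nat \<Rightarrow> real" where
  "water_filling B E b = real b * ln 2 + E / (4 * real B) - (real B - 1) * ln 2 / 2"

lemma water_filling_level:
  assumes "B \<ge> 1"
  shows "4 ^ b * exp (- 2 * water_filling B E b) = 2 ^ B / 2 * exp (- E / (2 * real B))"
proof -
  have pow2: "(2::real) ^ k = exp (real k * ln 2)" for k
    by (simp add: exp_of_nat_mult)
  have "(4::real) ^ b = 2 ^ (2 * b)"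
    by (simp add: power_mult)
  then have "4 ^ b * exp (- 2 * water_filling B E b)
      = exp (real (2 * b) * ln 2 + - 2 * water_filling B E b)"
    by (simp add: pow2 mult_exp_exp)
  also have "\<dots> = exp (real B * ln 2 - ln 2 + - E / (2 * real B))"
    using assms by (simp add: water_filling_def field_simps)
  also have "\<dots> = exp (real B * ln 2 - ln 2) * exp (- E / (2 * real B))"
    by (rule exp_add)
  also have "\<dots> = 2 ^ B / 2 * exp (- E / (2 * real B))"
    by (simp add: exp_diff pow2)
  finally show ?thesis .
qed

lemma sum_of_nat_lessThan: "(\<Sum>b<n. real b) = real n * (real n - 1) / 2"
  by (induction n) (auto simp: field_simps)

lemma water_filling_budget:
  assumes "B \<ge> 1"
  shows "(\<Sum>b<B. 4 * water_filling B E b) = E"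
proof -
  have "(\<Sum>b<B. water_filling B E b)
      = (\<Sum>b<B. real b) * ln 2 + real B * (E / (4 * real B) - (real B - 1) * ln 2 / 2)"
    unfolding water_filling_def
    by (simp add: sum.distrib sum_subtractf sum_distrib_right algebra_simps)
  also have "\<dots> = E / 4"
    using assms by (simp add: sum_of_nat_lessThan field_simps)
  finally show ?thesis by (simp flip: sum_distrib_left)
qed

lemma water_filling_nonneg:
  assumes "B \<ge> 1" and "E > 2 * real B * (real B - 1) * ln 2"
  shows "0 \<le> water_filling B E b"
proof -
  have "(real B - 1) * ln 2 / 2 < E / (4 * real B)"
    using assms by (simp add: field_simps)
  then show ?thesis
    unfolding water_filling_def by (simp add: add_increasing)
qed

lemma MSE_currents_2_eq_dur_obj: "MSE c B (\<lambda>_. 2) t = c * dur_obj B t"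
  by (simp add: MSE_def dur_obj_def)

lemma dur_obj_uniform:
  assumes "B \<ge> 1"
  shows "dur_obj B (\<lambda>_. E / (4 * real B)) = (4 ^ B - 1) / 3 * exp (- E / (2 * real B))"
proof -
  have "- 2 * (E / (4 * real B)) = - E / (2 * real B)"
    using assms by (simp add: field_simps)
  then show ?thesis
    by (simp add: dur_obj_def geometric_sum flip: sum_distrib_right)
qed

theorem theorem5:
  fixes B :: nat and E c :: real and tt :: "nat \<Rightarrow> real"
  assumes "B \<ge> 1" and "E > 0" and "c > 0"
    and "dur_optimal B E tt"
    and "E > 2 * real B * (real B - 1) * ln 2"
  shows "MSE c B (\<lambda>_. 2) tt = c * (real B / 2) * 2 ^ B * exp (- E / (2 * real B))
    \<and> MSE c B (\<lambda>_. 2) (\<lambda>_. E / (4 * real B)) = c * ((4 ^ B - 1) / 3) * exp (- E / (2 * real B))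
    \<and> MSE c B (\<lambda>_. 2) tt / MSE c B (\<lambda>_. 2) (\<lambda>_. E / (4 * real B))
        = (3 * real B / 2) * (2 ^ B / (4 ^ B - 1))"
proof -
  let ?e = "exp (- E / (2 * real B))"
  have "dur_obj B tt = real B * (2 ^ B / 2 * ?e)"
    by (rule dur_obj_optimal_eq_level[OF assms(4) water_filling_budget[OF assms(1)]
          water_filling_nonneg[OF assms(1,5)] water_filling_level[OF assms(1)]])
  then have opt: "MSE c B (\<lambda>_. 2) tt = c * (real B / 2) * 2 ^ B * ?e"
    by (simp add: MSE_currents_2_eq_dur_obj)
  have uniform: "MSE c B (\<lambda>_. 2) (\<lambda>_. E / (4 * real B)) = c * ((4 ^ B - 1) / 3) * ?e"
    using dur_obj_uniform[OF assms(1)] by (simp add: MSE_currents_2_eq_dur_obj)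
  have "(4::real) ^ B > 1"
    using assms(1) by (simp add: one_less_power)
  then have "c * (real B / 2) * 2 ^ B * x / (c * ((4 ^ B - 1) / 3) * x)
      = (3 * real B / 2) * (2 ^ B / (4 ^ B - 1))" if "x > 0" for x :: real
    using \<open>c > 0\<close> that by (simp add: field_simps)
  then show ?thesis
    unfolding opt uniform by simp
qed

end
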